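(* Let $0<\lambda<1/e$ and $E(z)=\lambda e^z$. Let $\underline s=(s_0,s_1,s_2,\dots)$ be any sequence of integers, $n\in\mathbb N$, and define $h_{\underline s,n}(u)=(L_{s_0}\circ L_{s_1}\circ\cdots\circ L_{s_n}\circ E^{n+1})(u)$ for real $u\ge\beta$. Then for all $u\ge\beta$, $$u\le\operatorname{Re}h_{\underline s,n}(u)\le u+\pi\sum_{k=1}^n\frac{2|s_k|+1}{\beta^{k-1}E^k(u)}.$$
   Context: For $0<\lambda<1/e$, $E(z)=\lambda e^z$ has real fixed points $\alpha<1<\beta$ ($\beta$ repelling). $L(x)=\log x-\log\lambda$ is the inverse of $E$ on $[\alpha,\infty)$. For $s\in\mathbb Z$, $L_s$ denotes the branch of the inverse of $E$ given by $L_s(z)=\log z-\log\lambda$, with the branch of $\log z$ whose imaginary part lies in $[(2s-1)\pi,(2s+1)\pi)$; thus $L_s$ maps into the strip $(2s-1)\pi\le\operatorname{Im}w<(2s+1)\pi$ and $\operatorname{Re}L_s(z)=L(|z|)$. $E^k$ denotes the $k$-th iterate of $E$. *)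

theory Defs
  imports "HOL-Analysis.Analysis"
begin

definition Emap :: "real \<Rightarrow> 'a::{real_normed_field,banach} \<Rightarrow> 'a" where
  "Emap lam z = of_real lam * exp z"

definition logbr :: "int \<Rightarrow> complex \<Rightarrow> complex" where
  "logbr s z = (THE w. exp w = z \<and> (2 * of_int s - 1) * pi \<le> Im w \<and> Im w < (2 * of_int s + 1) * pi)"

definition Lbr :: "real \<Rightarrow> int \<Rightarrow> complex \<Rightarrow> complex" where
  "Lbr lam s z = logbr s z - complex_of_real (ln lam)"

fun Lchain :: "real \<Rightarrow> (nat \<Rightarrow> int) \<Rightarrow> nat \<Rightarrow> complex \<Rightarrow> complex" where
  "Lchain lam s 0 = Lbr lam (s 0)"
| "Lchain lam s (Suc n) = Lchain lam s n \<circ> Lbr lam (s (Suc n))"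

definition hmap :: "real \<Rightarrow> (nat \<Rightarrow> int) \<Rightarrow> nat \<Rightarrow> real \<Rightarrow> complex" where
  "hmap lam s n u = Lchain lam s n ((Emap lam ^^ Suc n) (complex_of_real u))"

end

theory Submission
  imports Defs
begin

text \<open>Unwinding the chain from the outside gives \<open>h(s, n+1, u) = L(s 0, w)\<close> with
  \<open>w = h(s', n, E u)\<close> for the shifted sequence \<open>s'\<close>. Since \<open>Re L(t, w) = ln |w| - ln \<lambda>\<close> and
  \<open>|Im L(t, w)| \<le> (2|t| + 1) \<pi>\<close>, induction on \<open>n\<close> (carrying the imaginary bound along) yields
  \<open>E u \<le> Re w \<le> |w| \<le> Re w + (2|s 1| + 1) \<pi>\<close>. Taking logarithms, \<open>ln (E u) - ln \<lambda> = u\<close> and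
  \<open>ln (a + d) \<le> ln a + d / a\<close> with \<open>a = E u\<close> divide the error of \<open>w\<close> by \<open>E u \<ge> \<beta>\<close>,
  which produces the factors \<open>\<beta>^(k-1)\<close>.\<close>

lemma exp_in_strip_exists:
  fixes z :: complex
  assumes "z \<noteq> 0"
  obtains w where "exp w = z" "a \<le> Im w" "Im w < a + 2 * pi"
proof -
  define k where "k = \<lceil>(a - Im (Ln z)) / (2 * pi)\<rceil>"
  define w where "w = Ln z + complex_of_real (2 * real_of_int k * pi) * \<i>"
  have "exp (complex_of_real (2 * real_of_int k * pi) * \<i>) = 1"
    by (rule exp_integer_2pi) simp
  then have "exp w = z"
    using assms by (simp add: w_def exp_add exp_Ln)
  moreover have "(a - Im (Ln z)) / (2 * pi) \<le> k" "k < (a - Im (Ln z)) / (2 * pi) + 1"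
    unfolding k_def by linarith+
  then have "a \<le> Im w" "Im w < a + 2 * pi"
    by (simp_all add: w_def field_simps)
  ultimately show thesis by (rule that)
qed

lemma logbr_spec:
  assumes "z \<noteq> 0"
  shows "exp (logbr s z) = z \<and> (2 * of_int s - 1) * pi \<le> Im (logbr s z)
           \<and> Im (logbr s z) < (2 * of_int s + 1) * pi"
  unfolding logbr_def
proof (rule theI')
  have strip_top: "(2 * of_int s - 1) * pi + 2 * pi = (2 * of_int s + 1) * pi"
    by (simp add: algebra_simps)
  obtain w where w: "exp w = z" "(2 * of_int s - 1) * pi \<le> Im w" "Im w < (2 * of_int s + 1) * pi"
    using exp_in_strip_exists[OF assms, of "(2 * of_int s - 1) * pi"] unfolding strip_top .
  show "\<exists>!w. exp w = z \<and> (2 * of_int s - 1) * pi \<le> Im w \<and> Im w < (2 * of_int s + 1) * pi"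
  proof (rule ex1I[of _ w])
    fix v assume v: "exp v = z \<and> (2 * of_int s - 1) * pi \<le> Im v \<and> Im v < (2 * of_int s + 1) * pi"
    show "v = w"
    proof (rule exp_complex_eqI)
      show "\<bar>Im v - Im w\<bar> < 2 * pi"
        using v w strip_top unfolding abs_less_iff by linarith
      show "exp v = exp w" using v w by simp
    qed
  qed (use w in blast)
qed

lemma Re_Lbr:
  assumes "z \<noteq> 0"
  shows "Re (Lbr lam s z) = ln (cmod z) - ln lam"
  using logbr_spec[OF assms, of s] norm_exp_eq_Re[of "logbr s z"] by (simp add: Lbr_def)

lemma abs_Im_Lbr_le:
  assumes "z \<noteq> 0"
  shows "\<bar>Im (Lbr lam s z)\<bar> \<le> (2 * real_of_int \<bar>s\<bar> + 1) * pi"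
proof -
  have "(2 * of_int s - 1) * pi \<le> Im (logbr s z)" "Im (logbr s z) < (2 * of_int s + 1) * pi"
    using logbr_spec[OF assms, of s] by auto
  moreover have "- (2 * real_of_int \<bar>s\<bar> + 1) * pi \<le> (2 * of_int s - 1) * pi"
    using pi_ge_zero by (intro mult_right_mono) auto
  moreover have "(2 * of_int s + 1) * pi \<le> (2 * real_of_int \<bar>s\<bar> + 1) * pi"
    using pi_ge_zero by (intro mult_right_mono) auto
  moreover have "Im (Lbr lam s z) = Im (logbr s z)"
    by (simp add: Lbr_def)
  ultimately show ?thesis
    unfolding abs_le_iff by linarith
qed

lemma Lchain_Suc_outer:
  "Lchain lam s (Suc n) = Lbr lam (s 0) \<circ> Lchain lam (\<lambda>k. s (Suc k)) n"
  by (induction n) (auto simp: fun_eq_iff)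

lemma Emap_of_real: "Emap lam (complex_of_real x) = complex_of_real (Emap lam x)"
  by (simp add: Emap_def exp_of_real)

lemma funpow_Emap_of_real:
  "(Emap lam ^^ k) (complex_of_real x) = complex_of_real ((Emap lam ^^ k) x)"
  by (induction k) (simp_all add: Emap_of_real)

lemma hmap_0: "hmap lam s 0 u = Lbr lam (s 0) (complex_of_real (Emap lam u))"
  by (simp add: hmap_def Emap_of_real)

lemma hmap_Suc:
  "hmap lam s (Suc n) u = Lbr lam (s 0) (hmap lam (\<lambda>k. s (Suc k)) n (Emap lam u))"
  unfolding hmap_def Lchain_Suc_outer funpow_Suc_right by (simp add: Emap_of_real)

lemma ln_add_le:
  fixes a d :: real
  assumes "0 < a" "0 \<le> d"
  shows "ln (a + d) \<le> ln a + d / a"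
proof -
  have "ln (a + d) - ln a = ln ((a + d) / a)"
    using assms by (simp add: ln_div)
  also have "\<dots> \<le> (a + d) / a - 1"
    using assms by (intro ln_le_minus_one) simp
  also have "\<dots> = d / a"
    using assms by (simp add: field_simps)
  finally show ?thesis by simp
qed

context
  fixes lam beta :: real
  assumes lam_pos: "0 < lam" and fixed_point: "lam * exp beta = beta" and beta_gt_1: "1 < beta"
begin

lemma Emap_ge_beta: "beta \<le> x \<Longrightarrow> beta \<le> Emap lam x"
proof -
  assume "beta \<le> x"
  then have "lam * exp beta \<le> lam * exp x" using lam_pos by simp
  then show ?thesis using fixed_point by (simp add: Emap_def)
qed

lemma funpow_Emap_ge_beta: "beta \<le> x \<Longrightarrow> beta \<le> (Emap lam ^^ k) x"
  by (induction k) (simp_all add: Emap_ge_beta)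

lemma ln_Emap: "ln (Emap lam x) = ln lam + x"
  using lam_pos by (simp add: Emap_def ln_mult)

lemma orbit_sum_shift_div_le:
  fixes c :: "nat \<Rightarrow> real"
  assumes "beta \<le> u" and c_nonneg: "\<And>k. 0 \<le> c k"
  shows "((\<Sum>k=1..n. c (Suc k) / (beta ^ (k - 1) * (Emap lam ^^ k) (Emap lam u))) + c 1) / Emap lam u
           \<le> (\<Sum>k=1..Suc n. c k / (beta ^ (k - 1) * (Emap lam ^^ k) u))"
proof -
  let ?E = "Emap lam"
  have Eu: "beta \<le> ?E u" using Emap_ge_beta[OF assms(1)] .
  then have Eu_pos: "0 < ?E u" using beta_gt_1 by linarith
  have term_le: "c (Suc k) / (beta ^ (k - 1) * (?E ^^ k) (?E u)) / ?E u
      \<le> c (Suc k) / (beta ^ k * (?E ^^ Suc k) u)" if "1 \<le> k" for k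
  proof -
    have orbit: "(?E ^^ k) (?E u) = (?E ^^ Suc k) u"
      by (simp only: funpow_Suc_right o_apply)
    have pos: "0 < beta ^ k" "0 < beta ^ (k - 1)" "0 < (?E ^^ Suc k) u"
      using beta_gt_1 funpow_Emap_ge_beta[OF assms(1), of "Suc k"] by auto
    have "beta ^ k = beta ^ (k - 1) * beta"
      using that by (simp flip: power_Suc2)
    then have "beta ^ k * (?E ^^ Suc k) u \<le> beta ^ (k - 1) * (?E ^^ Suc k) u * ?E u"
      using Eu pos by (simp add: mult_left_mono mult.commute mult.left_commute)
    with pos Eu_pos show ?thesis
      unfolding orbit divide_divide_eq_left
      by (intro divide_left_mono c_nonneg) auto
  qed
  have "((\<Sum>k=1..n. c (Suc k) / (beta ^ (k - 1) * (?E ^^ k) (?E u))) + c 1) / ?E u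
      = (\<Sum>k=1..n. c (Suc k) / (beta ^ (k - 1) * (?E ^^ k) (?E u)) / ?E u) + c 1 / ?E u"
    by (simp add: add_divide_distrib sum_divide_distrib)
  also have "\<dots> \<le> (\<Sum>k=1..n. c (Suc k) / (beta ^ k * (?E ^^ Suc k) u)) + c 1 / ?E u"
    by (intro add_right_mono sum_mono term_le) simp
  also have "\<dots> = (\<Sum>k=0..n. c (Suc k) / (beta ^ k * (?E ^^ Suc k) u))"
    by (simp add: sum.atLeast_Suc_atMost[of 0 n])
  also have "\<dots> = (\<Sum>k=1..Suc n. c k / (beta ^ (k - 1) * (?E ^^ k) u))"
    unfolding One_nat_def sum.shift_bounds_cl_Suc_ivl by simp
  finally show ?thesis .
qed

lemma hmap_bounds:
  assumes "beta \<le> u"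
  shows "u \<le> Re (hmap lam s n u) \<and>
         Re (hmap lam s n u) \<le> u + pi * (\<Sum>k=1..n. (2 * real_of_int \<bar>s k\<bar> + 1) /
                 (beta ^ (k - 1) * (Emap lam ^^ k) u)) \<and>
         \<bar>Im (hmap lam s n u)\<bar> \<le> (2 * real_of_int \<bar>s 0\<bar> + 1) * pi"
  using assms
proof (induction n arbitrary: s u)
  case 0
  have "beta \<le> Emap lam u" using Emap_ge_beta[OF "0.prems"] .
  moreover from this have nz: "complex_of_real (Emap lam u) \<noteq> 0" using beta_gt_1 by auto
  ultimately show ?case
    using beta_gt_1 Re_Lbr[OF nz] abs_Im_Lbr_le[OF nz] by (simp add: hmap_0 ln_Emap)
next
  case (Suc n)
  let ?E = "Emap lam" and ?c = "\<lambda>k. 2 * real_of_int \<bar>s k\<bar> + 1"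
  define w where "w = hmap lam (\<lambda>k. s (Suc k)) n (?E u)"
  define S where "S = (\<Sum>k=1..n. ?c (Suc k) / (beta ^ (k - 1) * (?E ^^ k) (?E u)))"
  have Eu: "beta \<le> ?E u" using Emap_ge_beta[OF Suc.prems] .
  then have Eu_pos: "0 < ?E u" using beta_gt_1 by linarith
  have IH: "?E u \<le> Re w" "Re w \<le> ?E u + pi * S" "\<bar>Im w\<bar> \<le> ?c 1 * pi"
    using Suc.IH[OF Eu, of "\<lambda>k. s (Suc k)"] by (simp_all add: w_def S_def)
  have w_nz: "w \<noteq> 0" using IH(1) Eu_pos by auto
  have h: "hmap lam s (Suc n) u = Lbr lam (s 0) w"
    by (simp add: hmap_Suc w_def)
  have Re_h: "Re (hmap lam s (Suc n) u) = ln (cmod w) - ln lam"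
    using Re_Lbr[OF w_nz] h by simp
  define d where "d = pi * S + ?c 1 * pi"
  have d_nonneg: "0 \<le> d" using IH(1,2) unfolding d_def by simp
  have cmod_ge: "?E u \<le> cmod w" using IH(1) abs_Re_le_cmod[of w] by linarith
  have cmod_le: "cmod w \<le> ?E u + d" using cmod_le[of w] IH Eu_pos unfolding d_def by linarith
  have "u = ln (?E u) - ln lam" by (simp add: ln_Emap)
  also have "\<dots> \<le> Re (hmap lam s (Suc n) u)"
    using Re_h ln_mono[OF cmod_ge Eu_pos] by simp
  finally have lower: "u \<le> Re (hmap lam s (Suc n) u)" .
  have "Re (hmap lam s (Suc n) u) \<le> ln (?E u + d) - ln lam"
    using Re_h ln_mono[OF cmod_le] w_nz by simp
  also have "\<dots> \<le> u + d / ?E u"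
    using ln_add_le[OF Eu_pos d_nonneg] by (simp add: ln_Emap)
  also have "d / ?E u = pi * ((S + ?c 1) / ?E u)"
    by (simp add: d_def algebra_simps)
  also have "\<dots> \<le> pi * (\<Sum>k=1..Suc n. ?c k / (beta ^ (k - 1) * (?E ^^ k) u))"
    unfolding S_def by (intro mult_left_mono orbit_sum_shift_div_le[OF Suc.prems, of ?c n]) simp_all
  finally have upper: "Re (hmap lam s (Suc n) u) \<le> u + pi * (\<Sum>k=1..Suc n. ?c k / (beta ^ (k - 1) * (?E ^^ k) u))"
    by simp
  show ?case
    using lower upper abs_Im_Lbr_le[OF w_nz] h by simp
qed

end

theorem lemma4p1:
  fixes lam beta u :: real and s :: "nat \<Rightarrow> int" and n :: nat
  assumes "0 < lam" and "lam < exp (-1)"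
    and "lam * exp beta = beta" and "1 < beta"
    and "beta \<le> u"
  shows "u \<le> Re (hmap lam s n u) \<and>
         Re (hmap lam s n u) \<le> u + pi * (\<Sum>k=1..n. (2 * real_of_int \<bar>s k\<bar> + 1) /
                 (beta ^ (k - 1) * (Emap lam ^^ k) u))"
  \<comment> \<open>\<open>lam < exp (-1)\<close> only guarantees that the fixed point \<open>beta\<close> exists.\<close>
  using hmap_bounds[OF assms(1,3,4,5)] by blast

end
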